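(* Let $f:\mathbb{R}^\ell\times\mathbb{R}^m\to\mathbb{R}^\ell$ be $C^1$, let $\Lambda$ be a parameter shift with limits $\lambda_\pm$, and let $X$ define a stable path. Let $N\in\mathbb{N}$ be such that $\|[D_xf(X(s),\Lambda(s))]^n\|<\frac14$ for all $s\in\mathbb{R}$ and $n\ge N$. Then for all sufficiently small $\epsilon>0$ and, for each such $\epsilon$, all sufficiently small $r>0$, we have $F_r^n(\mathcal{N}_\epsilon)\subset\mathcal{N}_\epsilon$ for every $n\in\{N,N+1,\ldots,N(N+1)\}$.
   Context: A parameter shift is a $C^1$ function $\Lambda:\mathbb{R}\to\mathbb{R}^m$ with $\lim_{s\to\pm\infty}\Lambda(s)=\lambda_\pm$ and $\lim_{s\to\pm\infty}\Lambda'(s)=0$. A stable path is given by $X:\mathbb{R}\to\mathbb{R}^\ell$ such that: $X(s)$ is a fixed point of $f(\cdot,\Lambda(s))$ for every $s$; $\{(s,X(s))\}$ is a connected curve; the limits $X_\pm=\lim_{s\to\pm\infty}X(s)$ exist and are fixed points of $f(\cdot,\lambda_\pm)$; and the spectral radius of $D_xf(X(s),\Lambda(s))$ is $<1$ for all $s\in\mathbb{R}\cup\{\pm\infty\}$. For $r\ge0$, $F_r(s,x)=(s+r,f(x,\Lambda(s)))$ and $F_r^n$ is its $n$-fold composition. $\mathcal{N}_\epsilon=\{(s,x):s\in\mathbb{R},\ \|x-X(s)\|\le\epsilon\}$ (Euclidean norm; matrix norms induced). *)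

theory Defs
  imports "HOL-Analysis.Analysis"
begin

definition C1_field ::
  "(real^'l \<Rightarrow> real^'m \<Rightarrow> real^'l) \<Rightarrow> ((real^'l) \<times> (real^'m) \<Rightarrow> (((real^'l) \<times> (real^'m)) \<Rightarrow>\<^sub>L (real^'l))) \<Rightarrow> bool" where
  "C1_field f f' \<longleftrightarrow>
     (\<forall>p. ((\<lambda>q. f (fst q) (snd q)) has_derivative blinfun_apply (f' p)) (at p))
     \<and> continuous_on UNIV f'"

definition Dx ::
  "((real^'l) \<times> (real^'m) \<Rightarrow> (((real^'l) \<times> (real^'m)) \<Rightarrow>\<^sub>L (real^'l))) \<Rightarrow> real^'l \<Rightarrow> real^'m \<Rightarrow> real^'l \<Rightarrow> real^'l" where
  "Dx f' x lam = (\<lambda>v. blinfun_apply (f' (x, lam)) (v, 0))"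

definition spectral_radius :: "real^'n^'n \<Rightarrow> real" where
  "spectral_radius A =
     Max {cmod z | z. det ((mat z :: complex^'n^'n) - (\<chi> i j. complex_of_real (A $ i $ j))) = 0}"

definition parameter_shift ::
  "(real \<Rightarrow> real^'m) \<Rightarrow> (real \<Rightarrow> real^'m) \<Rightarrow> real^'m \<Rightarrow> real^'m \<Rightarrow> bool" where
  "parameter_shift Lam Lam' lm lp \<longleftrightarrow>
     (\<forall>s. (Lam has_vector_derivative Lam' s) (at s)) \<and> continuous_on UNIV Lam'
     \<and> (Lam \<longlongrightarrow> lm) at_bot \<and> (Lam \<longlongrightarrow> lp) at_top
     \<and> (Lam' \<longlongrightarrow> 0) at_bot \<and> (Lam' \<longlongrightarrow> 0) at_top"

definition stable_path ::
  "(real^'l \<Rightarrow> real^'m \<Rightarrow> real^'l) \<Rightarrow> ((real^'l) \<times> (real^'m) \<Rightarrow> (((real^'l) \<times> (real^'m)) \<Rightarrow>\<^sub>L (real^'l)))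
   \<Rightarrow> (real \<Rightarrow> real^'m) \<Rightarrow> real^'m \<Rightarrow> real^'m \<Rightarrow> (real \<Rightarrow> real^'l) \<Rightarrow> bool" where
  "stable_path f f' Lam lm lp X \<longleftrightarrow>
     (\<forall>s. f (X s) (Lam s) = X s)
     \<and> connected {(s, X s) | s. True}
     \<and> (\<exists>Xm Xp. (X \<longlongrightarrow> Xm) at_bot \<and> (X \<longlongrightarrow> Xp) at_top
          \<and> f Xm lm = Xm \<and> f Xp lp = Xp
          \<and> spectral_radius (matrix (Dx f' Xm lm)) < 1
          \<and> spectral_radius (matrix (Dx f' Xp lp)) < 1)
     \<and> (\<forall>s. spectral_radius (matrix (Dx f' (X s) (Lam s))) < 1)"

definition F_map :: "(real^'l \<Rightarrow> real^'m \<Rightarrow> real^'l) \<Rightarrow> (real \<Rightarrow> real^'m) \<Rightarrow> real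
   \<Rightarrow> real \<times> (real^'l) \<Rightarrow> real \<times> (real^'l)" where
  "F_map f Lam r = (\<lambda>(s, x). (s + r, f x (Lam s)))"

definition nbhd_path :: "(real \<Rightarrow> real^'l) \<Rightarrow> real \<Rightarrow> (real \<times> (real^'l)) set" where
  "nbhd_path X \<epsilon> = {(s, x). norm (x - X s) \<le> \<epsilon>}"

end

theory Submission
  imports Defs
begin

(* Write A(s) for D_x f(X(s), Lam(s)). The bound on A(s)^N makes I - A(s) boundedly invertible,
   so near each point of the path the fixed points of f(., lambda) depend Lipschitz-continuously
   on lambda; as the graph of X is connected, X cannot jump to another branch of fixed points and
   is therefore continuous, hence (by its limits at +-infinity) bounded and uniformly continuous.
   Fix n. Uniform differentiability of f on a compact neighbourhood of the path and a discrete
   Gronwall estimate show that an orbit of F_r started at (s, x) with |x - X(s)| <= eps ends at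
   distance o(eps) + O(D) from X(s) + A(s)^n (x - X(s)), where D bounds |Lam(s + k r) - Lam(s)|
   for k < n. The linear part contributes at most eps/4, and D as well as |X(s + n r) - X(s)|
   become arbitrarily small as r -> 0. *)

lemma uniformly_continuous_on_UNIV_if_tendsto_at_top_at_bot:
  fixes g :: "real \<Rightarrow> 'a::metric_space"
  assumes cont: "continuous_on UNIV g" and top: "(g \<longlongrightarrow> a) at_top" and bot: "(g \<longlongrightarrow> b) at_bot"
  shows "uniformly_continuous_on UNIV g"
  unfolding uniformly_continuous_on_def
proof (intro allI impI)
  fix e :: real assume "e > 0"
  then have e2: "e/2 > 0" by simp
  obtain T where T: "\<And>s. s \<ge> T \<Longrightarrow> dist (g s) a < e/2"
    using tendstoD[OF top e2] by (auto simp: eventually_at_top_linorder)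
  obtain T' where T': "\<And>s. s \<le> T' \<Longrightarrow> dist (g s) b < e/2"
    using tendstoD[OF bot e2] by (auto simp: eventually_at_bot_linorder)
  have "uniformly_continuous_on {T'-1..T+1} g"
    using compact_uniformly_continuous[OF continuous_on_subset[OF cont] compact_Icc] by blast
  then obtain d where d: "d > 0"
    and close: "\<And>x x'. x \<in> {T'-1..T+1} \<Longrightarrow> x' \<in> {T'-1..T+1} \<Longrightarrow> dist x' x < d \<Longrightarrow> dist (g x') (g x) < e"
    unfolding uniformly_continuous_on_def using \<open>e > 0\<close> by metis
  show "\<exists>d>0. \<forall>x\<in>UNIV. \<forall>x'\<in>UNIV. dist x' x < d \<longrightarrow> dist (g x') (g x) < e"
  proof (intro exI[of _ "min d 1"] conjI ballI impI)
    fix x x' :: real assume xx': "dist x' x < min d 1"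
    consider "x \<in> {T'-1..T+1} \<and> x' \<in> {T'-1..T+1}" | "x \<ge> T \<and> x' \<ge> T" | "x \<le> T' \<and> x' \<le> T'"
      using xx' by (force simp: dist_real_def)
    then show "dist (g x') (g x) < e"
    proof cases
      case 1
      then show ?thesis using close xx' by simp
    next
      case 2
      then show ?thesis using T by (metis dist_commute dist_triangle_half_r)
    next
      case 3
      then show ?thesis using T' by (metis dist_commute dist_triangle_half_r)
    qed
  qed (use d in simp)
qed

lemma bounded_range_if_tendsto_at_top_at_bot:
  fixes g :: "real \<Rightarrow> 'a::metric_space"
  assumes cont: "continuous_on UNIV g" and top: "(g \<longlongrightarrow> a) at_top" and bot: "(g \<longlongrightarrow> b) at_bot"
  shows "bounded (range g)"
proof -
  obtain T where T: "\<And>s. s \<ge> T \<Longrightarrow> dist (g s) a < 1"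
    using tendstoD[OF top, of 1] by (auto simp: eventually_at_top_linorder)
  obtain T' where T': "\<And>s. s \<le> T' \<Longrightarrow> dist (g s) b < 1"
    using tendstoD[OF bot, of 1] by (auto simp: eventually_at_bot_linorder)
  have "g s \<in> g ` {T'..T} \<union> ball a 1 \<union> ball b 1" for s
    using T[of s] T'[of s] by (cases "s \<le> T'"; cases "s \<ge> T") (auto simp: dist_commute)
  then have "range g \<subseteq> g ` {T'..T} \<union> ball a 1 \<union> ball b 1" by blast
  moreover have "bounded (g ` {T'..T})"
    using compact_continuous_image[OF continuous_on_subset[OF cont] compact_Icc] compact_imp_bounded by blast
  ultimately show ?thesis by (meson bounded_Un bounded_ball bounded_subset)
qed

lemma uniformly_continuous_on_UNIV_eventually_shifts_close:
  fixes g :: "real \<Rightarrow> 'a::metric_space"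
  assumes "uniformly_continuous_on UNIV g" and "e > 0"
  shows "\<forall>\<^sub>F r in at_right 0. \<forall>s. \<forall>k\<le>n. dist (g (s + real k * r)) (g s) < e"
proof -
  obtain \<rho> where "\<rho> > 0" and \<rho>: "\<And>x x'. dist x' x < \<rho> \<Longrightarrow> dist (g x') (g x) < e"
    using assms unfolding uniformly_continuous_on_def by (metis UNIV_I)
  show ?thesis
    unfolding eventually_at_right_field
  proof (intro exI[of _ "\<rho> / (real n + 1)"] conjI allI impI)
    fix r s :: real and k assume "0 < r" "r < \<rho> / (real n + 1)" "k \<le> n"
    then have "real k * r \<le> real n * r" by (simp add: mult_right_mono)
    also have "\<dots> < \<rho>" using \<open>0 < r\<close> \<open>r < \<rho> / (real n + 1)\<close> by (simp add: field_simps)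
    finally have "real k * r < \<rho>" .
    then show "dist (g (s + real k * r)) (g s) < e"
      using \<rho> \<open>0 < r\<close> by (simp add: dist_real_def)
  qed (use \<open>\<rho> > 0\<close> in simp)
qed

lemma bound_by_affine_recurrence:
  fixes u :: "nat \<Rightarrow> real"
  assumes "u 0 \<le> a" and "1 \<le> c" and "0 \<le> b"
    and step: "\<And>k. k < n \<Longrightarrow> u k \<le> c ^ k * (a + real k * b) \<Longrightarrow> u (Suc k) \<le> c * u k + b"
  shows "k \<le> n \<Longrightarrow> u k \<le> c ^ k * (a + real k * b)"
proof (induction k)
  case 0
  then show ?case using assms(1) by simp
next
  case (Suc k)
  then have IH: "u k \<le> c ^ k * (a + real k * b)" by simp
  have "u (Suc k) \<le> c * u k + b"
    using step[OF _ IH] Suc.prems by simp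
  also have "\<dots> \<le> c * (c ^ k * (a + real k * b)) + b"
    using IH \<open>1 \<le> c\<close> by simp
  also have "\<dots> \<le> c ^ Suc k * (a + real k * b) + c ^ Suc k * b"
    using \<open>0 \<le> b\<close> one_le_power[OF \<open>1 \<le> c\<close>, of "Suc k"] by (simp add: mult_le_cancel_right1)
  finally show ?case by (simp add: algebra_simps)
qed

lemma bounded_linear_funpow: "bounded_linear (T :: 'a::real_normed_vector \<Rightarrow> 'a) \<Longrightarrow> bounded_linear (T ^^ k)"
  by (induction k) (auto intro: bounded_linear_ident bounded_linear_compose simp: comp_def)

lemma funpow_telescope:
  assumes "bounded_linear T"
  shows "v - (T ^^ n) v = (\<Sum>k<n. (T ^^ k) (v - T v))"
proof (induction n)
  case (Suc n)
  interpret bounded_linear "T ^^ n" using bounded_linear_funpow[OF assms] .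
  have "v - (T ^^ Suc n) v = (v - (T ^^ n) v) + (T ^^ n) (v - T v)"
    by (simp add: diff funpow_swap1)
  then show ?case using Suc by simp
qed simp

lemma bounded_below_id_minus_if_onorm_funpow_less_one:
  assumes T: "bounded_linear T" and "onorm (T ^^ N) < 1"
  obtains c where "c > 0" and "\<And>v. c * norm v \<le> norm (v - T v)"
proof
  define S where "S = (\<Sum>k<N. onorm (T ^^ k))"
  have "S \<ge> 0" unfolding S_def by (intro sum_nonneg onorm_pos_le bounded_linear_funpow T)
  then show "(1 - onorm (T ^^ N)) / (S + 1) > 0" using assms(2) by simp
  fix v
  have "(1 - onorm (T ^^ N)) * norm v \<le> norm v - norm ((T ^^ N) v)"
    using onorm[OF bounded_linear_funpow[OF T]] by (simp add: algebra_simps)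
  also have "\<dots> \<le> norm (\<Sum>k<N. (T ^^ k) (v - T v))"
    using norm_triangle_ineq2 funpow_telescope[OF T] by metis
  also have "\<dots> \<le> (\<Sum>k<N. onorm (T ^^ k) * norm (v - T v))"
    by (intro order_trans[OF norm_sum] sum_mono onorm bounded_linear_funpow T)
  also have "\<dots> = S * norm (v - T v)"
    by (simp add: S_def sum_distrib_right)
  also have "\<dots> \<le> (S + 1) * norm (v - T v)"
    by (simp add: distrib_right)
  finally show "(1 - onorm (T ^^ N)) / (S + 1) * norm v \<le> norm (v - T v)"
    using \<open>S \<ge> 0\<close> by (simp add: field_simps)
qed

lemma connected_graph_bound_right:
  fixes X :: "real \<Rightarrow> 'a::real_normed_vector"
  assumes conn: "connected {(s, X s) | s. True}" and "B > 0" and "s0 < t"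
    and gap: "\<And>s. s0 < s \<Longrightarrow> s < t \<Longrightarrow> norm (X s - X s0) < B \<Longrightarrow> norm (X s - X s0) < B/2"
  shows "norm (X t - X s0) < B"
proof (rule ccontr)
  assume far: "\<not> norm (X t - X s0) < B"
  let ?G = "{(s, X s) | s. True}"
  define U where "U = {z. fst z < t \<and> norm (snd z - X s0) < B} \<union> {z. fst z < s0}"
  define V where "V = {z. t < fst z} \<union> {z. s0 < fst z \<and> B/2 < norm (snd z - X s0)}"
  have "open U" "open V"
    unfolding U_def V_def
    by (intro open_Un open_Int open_Collect_conj open_Collect_less continuous_intros)+
  moreover have "U \<inter> V \<inter> ?G = {}"
  proof -
    have False if "(s, X s) \<in> U" "(s, X s) \<in> V" for s
      using that gap[of s] \<open>s0 < t\<close> by (auto simp: U_def V_def)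
    then show ?thesis by blast
  qed
  moreover have "(s, X s) \<in> U \<union> V" for s
  proof -
    consider "s < s0" | "s = s0" | "s0 < s" "s < t" | "s = t" | "t < s" by linarith
    then show ?thesis
      using far \<open>B > 0\<close> \<open>s0 < t\<close>
      by cases (auto simp: U_def V_def not_less)
  qed
  then have "?G \<subseteq> U \<union> V" by blast
  moreover have "(s0, X s0) \<in> U \<inter> ?G" "(t, X t) \<in> V \<inter> ?G"
    using far \<open>B > 0\<close> \<open>s0 < t\<close> by (auto simp: U_def V_def)
  ultimately show False
    using connectedD[OF conn] by blast
qed

lemma connected_graph_bound:
  fixes X :: "real \<Rightarrow> 'a::real_normed_vector"
  assumes conn: "connected {(s, X s) | s. True}" and "B > 0" and "\<bar>t - s0\<bar> < a"
    and gap: "\<And>s. \<bar>s - s0\<bar> < a \<Longrightarrow> norm (X s - X s0) < B \<Longrightarrow> norm (X s - X s0) < B/2"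
  shows "norm (X t - X s0) < B"
proof -
  consider "s0 < t" | "t = s0" | "t < s0" by linarith
  then show ?thesis
  proof cases
    case 1
    then show ?thesis
      using connected_graph_bound_right[OF conn \<open>B > 0\<close>] gap \<open>\<bar>t - s0\<bar> < a\<close> by force
  next
    case 2
    then show ?thesis using \<open>B > 0\<close> by simp
  next
    case 3
    define Y where "Y s = X (2 * s0 - s)" for s
    have "{(s, Y s) | s. True} = (\<lambda>z. (2 * s0 - fst z, snd z)) ` {(s, X s) | s. True}"
      unfolding Y_def by (auto simp: image_iff intro!: exI[of _ "2 * s0 - _"])
    also have "connected \<dots>"
      by (intro connected_continuous_image conn continuous_intros)
    finally have "norm (Y (2 * s0 - t) - Y s0) < B"
      using connected_graph_bound_right[of Y B s0 "2 * s0 - t"] \<open>B > 0\<close> 3 gap \<open>\<bar>t - s0\<bar> < a\<close>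
      unfolding Y_def by force
    then show ?thesis unfolding Y_def by simp
  qed
qed

context
  fixes g :: "'a::real_normed_vector \<times> 'b::real_normed_vector \<Rightarrow> 'a"
    and G :: "('a \<times> 'b) \<Rightarrow>\<^sub>L 'a" and x0 :: 'a and l0 :: 'b and M \<eta> \<delta> :: real
  assumes norm_G: "norm G \<le> M" and "0 \<le> \<eta>"
    and remainder: "\<And>q. norm (q - (x0, l0)) < \<delta> \<Longrightarrow>
      norm (g q - x0 - blinfun_apply G (q - (x0, l0))) \<le> \<eta> * norm (q - (x0, l0))"
begin

lemma blinfun_apply_Pair_split: "blinfun_apply G (u, w) = blinfun_apply G (u, 0) + blinfun_apply G (0, w)"
  by (simp add: blinfun.add_right[symmetric])

lemma norm_blinfun_apply_le: "norm (blinfun_apply G v) \<le> M * norm v"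
  using norm_blinfun[of G v] norm_G by (meson mult_right_mono norm_ge_zero order_trans)

lemma fixed_point_displacement_le:
  assumes "\<And>v. c * norm v \<le> norm (v - blinfun_apply G (v, 0))"
    and "norm ((x, l) - (x0, l0)) < \<delta>" and "g (x, l) = x"
  shows "(c - \<eta>) * norm (x - x0) \<le> (M + \<eta>) * norm (l - l0)"
proof -
  let ?u = "x - x0" and ?w = "l - l0"
  have eq: "?u - blinfun_apply G (?u, 0) = (g (x, l) - x0 - blinfun_apply G (?u, ?w)) + blinfun_apply G (0, ?w)"
    using assms(3) blinfun_apply_Pair_split[of ?u ?w] by simp
  have "c * norm ?u \<le> norm ((g (x, l) - x0 - blinfun_apply G (?u, ?w)) + blinfun_apply G (0, ?w))"
    using assms(1)[of ?u] unfolding eq .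
  also have "\<dots> \<le> norm (g (x, l) - x0 - blinfun_apply G (?u, ?w)) + norm (blinfun_apply G (0, ?w))"
    by (rule norm_triangle_ineq)
  finally have "c * norm ?u \<le> norm (g (x, l) - x0 - blinfun_apply G (?u, ?w)) + norm (blinfun_apply G (0, ?w))" .
  moreover have "norm (g (x, l) - x0 - blinfun_apply G (?u, ?w)) \<le> \<eta> * (norm ?u + norm ?w)"
  proof -
    have "\<eta> * norm (?u, ?w) \<le> \<eta> * (norm ?u + norm ?w)"
      using norm_Pair_le \<open>0 \<le> \<eta>\<close> by (rule mult_left_mono)
    then show ?thesis using remainder[OF assms(2)] by simp
  qed
  moreover have "norm (blinfun_apply G (0, ?w)) \<le> M * norm ?w"
    using norm_blinfun_apply_le[of "(0, ?w)"] by (simp add: norm_Pair)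
  ultimately have "c * norm ?u \<le> \<eta> * norm ?u + (M + \<eta>) * norm ?w"
    by (simp add: algebra_simps)
  then show ?thesis by (simp add: left_diff_distrib)
qed

lemma orbit_norm_bound:
  assumes "\<eta> \<le> 1" and "0 \<le> D" and "norm (xs 0 - x0) \<le> \<epsilon>"
    and orbit: "\<And>k. k < n \<Longrightarrow> xs (Suc k) = g (xs k, ls k)"
    and params: "\<And>k. k < n \<Longrightarrow> norm (ls k - l0) \<le> D"
    and small: "(M + 1) ^ n * (\<epsilon> + real n * ((M + 1) * D)) + D < \<delta>"
  shows "k \<le> n \<Longrightarrow> norm (xs k - x0) \<le> (M + 1) ^ n * (\<epsilon> + real n * ((M + 1) * D))"
proof -
  have "0 \<le> M" using norm_G norm_ge_zero order_trans by blast
  then have "1 \<le> M + 1" "0 \<le> (M + 1) * D" using \<open>0 \<le> D\<close> by simp_all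
  have "0 \<le> \<epsilon>" using assms(3) norm_ge_zero order_trans by blast
  have mono: "(M + 1) ^ k * (\<epsilon> + real k * ((M + 1) * D)) \<le> (M + 1) ^ n * (\<epsilon> + real n * ((M + 1) * D))"
    if "k \<le> n" for k
    using that \<open>1 \<le> M + 1\<close> \<open>0 \<le> (M + 1) * D\<close> \<open>0 \<le> \<epsilon>\<close>
    by (intro mult_mono power_increasing add_left_mono mult_right_mono) auto
  have "norm (xs k - x0) \<le> (M + 1) ^ k * (\<epsilon> + real k * ((M + 1) * D))" if "k \<le> n" for k
  proof (rule bound_by_affine_recurrence[where u = "\<lambda>k. norm (xs k - x0)", OF _ \<open>1 \<le> M + 1\<close> _ _ that])
    fix k assume "k < n" and bound_k: "norm (xs k - x0) \<le> (M + 1) ^ k * (\<epsilon> + real k * ((M + 1) * D))"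
    let ?v = "(xs k, ls k) - (x0, l0)"
    have v: "norm ?v \<le> norm (xs k - x0) + D"
      using norm_Pair_le[of "xs k - x0" "ls k - l0"] params[OF \<open>k < n\<close>] by simp
    then have "norm ?v < \<delta>" using bound_k mono[of k] \<open>k < n\<close> small by simp
    have eq: "xs (Suc k) - x0 = blinfun_apply G ?v + (g (xs k, ls k) - x0 - blinfun_apply G ?v)"
      using orbit[OF \<open>k < n\<close>] by simp
    have "norm (xs (Suc k) - x0) \<le> M * norm ?v + \<eta> * norm ?v"
      unfolding eq using norm_triangle_ineq[of "blinfun_apply G ?v" "g (xs k, ls k) - x0 - blinfun_apply G ?v"]
        norm_blinfun_apply_le[of ?v] remainder[OF \<open>norm ?v < \<delta>\<close>]
      by linarith
    also have "\<dots> \<le> (M + 1) * norm ?v"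
      using mult_right_mono[OF \<open>\<eta> \<le> 1\<close> norm_ge_zero[of ?v]] by (simp add: distrib_right)
    also have "\<dots> \<le> (M + 1) * norm (xs k - x0) + (M + 1) * D"
      using mult_left_mono[OF v] \<open>1 \<le> M + 1\<close> by (simp add: distrib_left)
    finally show "norm (xs (Suc k) - x0) \<le> (M + 1) * norm (xs k - x0) + (M + 1) * D" .
  qed (use assms(3) \<open>0 \<le> (M + 1) * D\<close> in simp_all)
  then show "k \<le> n \<Longrightarrow> norm (xs k - x0) \<le> (M + 1) ^ n * (\<epsilon> + real n * ((M + 1) * D))"
    using mono order_trans by blast
qed

lemma orbit_linearization_error:
  assumes orbit: "\<And>k. k < n \<Longrightarrow> xs (Suc k) = g (xs k, ls k)"
    and params: "\<And>k. k < n \<Longrightarrow> norm (ls k - l0) \<le> D"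
    and near: "\<And>k. k < n \<Longrightarrow> norm (xs k - x0) \<le> E" and "E + D < \<delta>" and "0 \<le> D" and "0 \<le> E"
  shows "norm (xs n - x0 - ((\<lambda>v. blinfun_apply G (v, 0)) ^^ n) (xs 0 - x0))
    \<le> (M + 1) ^ n * (real n * (M * D + \<eta> * (E + D)))"
proof -
  let ?A = "\<lambda>v. blinfun_apply G (v, 0)"
  interpret A: bounded_linear ?A
    by (rule bounded_linear_compose[OF blinfun.bounded_linear_right]) (rule bounded_linear_Pair; simp)
  have "0 \<le> M" using norm_G norm_ge_zero order_trans by blast
  have "norm (xs k - x0 - (?A ^^ k) (xs 0 - x0)) \<le> (M + 1) ^ k * (0 + real k * (M * D + \<eta> * (E + D)))"
    if "k \<le> n" for k
  proof (rule bound_by_affine_recurrence[where u = "\<lambda>k. norm (xs k - x0 - (?A ^^ k) (xs 0 - x0))", OF _ _ _ _ that])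
    show "1 \<le> M + 1" "0 \<le> M * D + \<eta> * (E + D)"
      using \<open>0 \<le> M\<close> \<open>0 \<le> D\<close> \<open>0 \<le> \<eta>\<close> \<open>0 \<le> E\<close> by simp_all
  next
    fix k assume "k < n"
    let ?v = "(xs k, ls k) - (x0, l0)" and ?d = "xs k - x0 - (?A ^^ k) (xs 0 - x0)"
    have "norm ?v \<le> norm (xs k - x0) + D"
      using norm_Pair_le[of "xs k - x0" "ls k - l0"] params[OF \<open>k < n\<close>] by simp
    then have v: "norm ?v \<le> E + D" "norm ?v < \<delta>"
      using near[OF \<open>k < n\<close>] \<open>E + D < \<delta>\<close> by simp_all
    let ?r = "g (xs k, ls k) - x0 - blinfun_apply G ?v" and ?p = "blinfun_apply G (0, ls k - l0)"
    have eq: "xs (Suc k) - x0 - (?A ^^ Suc k) (xs 0 - x0) = ?r + ?p + ?A ?d"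
      using orbit[OF \<open>k < n\<close>] blinfun_apply_Pair_split[of "xs k - x0" "ls k - l0"] A.diff
      by simp
    have "norm (xs (Suc k) - x0 - (?A ^^ Suc k) (xs 0 - x0)) \<le> norm ?r + norm ?p + norm (?A ?d)"
      unfolding eq using norm_triangle_ineq[of "?r + ?p" "?A ?d"] norm_triangle_ineq[of ?r ?p] by linarith
    moreover have "norm ?r \<le> \<eta> * (E + D)"
      using remainder[OF v(2)] mult_left_mono[OF v(1) \<open>0 \<le> \<eta>\<close>] by simp
    moreover have "norm ?p \<le> M * D"
      using norm_blinfun_apply_le[of "(0, ls k - l0)"] params[OF \<open>k < n\<close>] \<open>0 \<le> M\<close>
      by (simp add: norm_Pair order_trans mult_left_mono)
    moreover have "norm (?A ?d) \<le> M * norm ?d"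
      using norm_blinfun_apply_le[of "(?d, 0)"] by (simp add: norm_Pair)
    ultimately have "norm (xs (Suc k) - x0 - (?A ^^ Suc k) (xs 0 - x0)) \<le> \<eta> * (E + D) + M * D + M * norm ?d"
      by linarith
    also have "\<dots> \<le> (M + 1) * norm ?d + (M * D + \<eta> * (E + D))"
      by (simp add: algebra_simps)
    finally show "norm (xs (Suc k) - x0 - (?A ^^ Suc k) (xs 0 - x0)) \<le> (M + 1) * norm ?d + (M * D + \<eta> * (E + D))" .
  qed simp
  then show ?thesis by simp
qed

end

lemma Dx_bounded_linear: "bounded_linear (Dx f' x l)"
  unfolding Dx_def
  by (rule bounded_linear_compose[OF blinfun.bounded_linear_right]) (rule bounded_linear_Pair; simp)

lemma fixed_points_locally_Lipschitz:
  fixes f :: "real^'l \<Rightarrow> real^'m \<Rightarrow> real^'l"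
    and f' :: "(real^'l) \<times> (real^'m) \<Rightarrow> (((real^'l) \<times> (real^'m)) \<Rightarrow>\<^sub>L (real^'l))"
  assumes deriv: "((\<lambda>q. f (fst q) (snd q)) has_derivative blinfun_apply (f' (x0, l0))) (at (x0, l0))"
    and fixed: "f x0 l0 = x0" and contr: "onorm (Dx f' x0 l0 ^^ N) < 1"
  obtains \<delta> K where "\<delta> > 0" and "K \<ge> 0"
    and "\<And>x l. norm (x - x0) < \<delta> \<Longrightarrow> norm (l - l0) < \<delta> \<Longrightarrow> f x l = x \<Longrightarrow>
      norm (x - x0) \<le> K * norm (l - l0)"
proof -
  let ?G = "f' (x0, l0)"
  obtain c where "c > 0" and c: "\<And>v. c * norm v \<le> norm (v - blinfun_apply ?G (v, 0))"
    using bounded_below_id_minus_if_onorm_funpow_less_one[OF Dx_bounded_linear contr]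
    unfolding Dx_def by blast
  obtain \<delta> where "\<delta> > 0" and remainder0: "\<forall>q. norm (q - (x0, l0)) < \<delta> \<longrightarrow>
      norm (f (fst q) (snd q) - f (fst (x0, l0)) (snd (x0, l0)) - blinfun_apply ?G (q - (x0, l0)))
        \<le> c/2 * norm (q - (x0, l0))"
    using conjunct2[OF deriv[unfolded has_derivative_at_alt], rule_format, of "c/2"] \<open>c > 0\<close>
    by auto
  have remainder: "norm (f (fst q) (snd q) - x0 - blinfun_apply ?G (q - (x0, l0))) \<le> c/2 * norm (q - (x0, l0))"
    if "norm (q - (x0, l0)) < \<delta>" for q
    using remainder0[rule_format, OF that] fixed by simp
  show ?thesis
  proof
    show "\<delta>/2 > 0" "(norm ?G + c/2) / (c/2) \<ge> 0" using \<open>\<delta> > 0\<close> \<open>c > 0\<close> by simp_all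
    fix x l assume "norm (x - x0) < \<delta>/2" "norm (l - l0) < \<delta>/2" and "f x l = x"
    then have "norm ((x, l) - (x0, l0)) < \<delta>"
      using norm_Pair_le[of "x - x0" "l - l0"] by simp
    from fixed_point_displacement_le[where g = "\<lambda>q. f (fst q) (snd q)" and G = ?G,
        OF order_refl _ remainder c this] fixed \<open>f x l = x\<close> \<open>c > 0\<close>
    have "(c - c/2) * norm (x - x0) \<le> (norm ?G + c/2) * norm (l - l0)"
      by simp
    then show "norm (x - x0) \<le> (norm ?G + c/2) / (c/2) * norm (l - l0)"
      using \<open>c > 0\<close> by (simp add: field_simps)
  qed
qed

text \<open>The Lipschitz bound is only assumed for graph points close to \<open>(s0, X s0)\<close>; being
  connected, the graph cannot jump across the annulus between the radii \<open>\<delta>/2\<close> and \<open>\<delta>\<close>, so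
  the bound holds for all \<open>s\<close> near \<open>s0\<close>.\<close>

lemma isCont_if_connected_graph_locally_Lipschitz:
  fixes X :: "real \<Rightarrow> 'a::real_normed_vector" and Lam :: "real \<Rightarrow> 'b::real_normed_vector"
  assumes conn: "connected {(s, X s) | s. True}" and "isCont Lam s0" and "\<delta> > 0" and "K \<ge> 0"
    and lipschitz: "\<And>s. norm (X s - X s0) < \<delta> \<Longrightarrow> norm (Lam s - Lam s0) < \<delta> \<Longrightarrow>
      norm (X s - X s0) \<le> K * norm (Lam s - Lam s0)"
  shows "isCont X s0"
proof -
  have "\<delta> / (2 * (K + 1)) > 0" using \<open>\<delta> > 0\<close> \<open>K \<ge> 0\<close> by simp
  then obtain a where "a > 0" and a: "\<And>s. \<bar>s - s0\<bar> < a \<Longrightarrow> norm (Lam s - Lam s0) < \<delta> / (2 * (K + 1))"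
    using \<open>isCont Lam s0\<close> unfolding continuous_at_eps_delta by (force simp: dist_norm)
  have Lam_near: "norm (Lam s - Lam s0) < \<delta>" "K * norm (Lam s - Lam s0) < \<delta>/2" if "\<bar>s - s0\<bar> < a" for s
  proof -
    have "K * norm (Lam s - Lam s0) \<le> K * (\<delta> / (2 * (K + 1)))"
      using mult_left_mono[OF less_imp_le[OF a[OF that]] \<open>K \<ge> 0\<close>] .
    also have "\<dots> < \<delta>/2" using \<open>K \<ge> 0\<close> \<open>\<delta> > 0\<close> by (simp add: field_simps)
    finally show "K * norm (Lam s - Lam s0) < \<delta>/2" .
    have "\<delta> / (2 * (K + 1)) \<le> \<delta>/2" using \<open>K \<ge> 0\<close> \<open>\<delta> > 0\<close> by (simp add: field_simps)
    then show "norm (Lam s - Lam s0) < \<delta>" using a[OF that] \<open>\<delta> > 0\<close> by linarith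
  qed
  have "norm (X s - X s0) \<le> K * norm (Lam s - Lam s0)" if "\<bar>s - s0\<bar> < a" for s
  proof (rule lipschitz)
    show "norm (X s - X s0) < \<delta>"
    proof (rule connected_graph_bound[OF conn \<open>\<delta> > 0\<close> that])
      fix t assume "\<bar>t - s0\<bar> < a" and "norm (X t - X s0) < \<delta>"
      then show "norm (X t - X s0) < \<delta>/2"
        using lipschitz[of t] Lam_near[of t] by simp
    qed
  qed (use Lam_near that in auto)
  then have "\<forall>\<^sub>F s in at s0. norm (X s - X s0) \<le> K * norm (Lam s - Lam s0)"
    unfolding eventually_at using \<open>a > 0\<close> by (auto simp: dist_real_def)
  moreover have "((\<lambda>s. K * norm (Lam s - Lam s0)) \<longlongrightarrow> 0) (at s0)"
    using \<open>isCont Lam s0\<close> by (auto intro!: tendsto_eq_intros simp: isCont_def LIM_zero_iff)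
  ultimately have "((\<lambda>s. X s - X s0) \<longlongrightarrow> 0) (at s0)"
    by (rule Lim_null_comparison)
  then show "isCont X s0"
    unfolding isCont_def LIM_zero_iff .
qed

lemma continuous_on_path_of_fixed_points:
  fixes f :: "real^'l \<Rightarrow> real^'m \<Rightarrow> real^'l"
    and f' :: "(real^'l) \<times> (real^'m) \<Rightarrow> (((real^'l) \<times> (real^'m)) \<Rightarrow>\<^sub>L (real^'l))"
    and Lam :: "real \<Rightarrow> real^'m" and X :: "real \<Rightarrow> real^'l"
  assumes deriv: "\<And>p. ((\<lambda>q. f (fst q) (snd q)) has_derivative blinfun_apply (f' p)) (at p)"
    and fixed: "\<And>s. f (X s) (Lam s) = X s" and conn: "connected {(s, X s) | s. True}"
    and cont: "continuous_on UNIV Lam" and contr: "\<And>s. onorm (Dx f' (X s) (Lam s) ^^ N) < 1"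
  shows "continuous_on UNIV X"
proof (rule continuous_at_imp_continuous_on, rule ballI)
  fix s0 :: real
  obtain \<delta> K where "\<delta> > 0" "K \<ge> 0" and lipschitz: "\<And>x l. norm (x - X s0) < \<delta> \<Longrightarrow>
      norm (l - Lam s0) < \<delta> \<Longrightarrow> f x l = x \<Longrightarrow> norm (x - X s0) \<le> K * norm (l - Lam s0)"
    using fixed_points_locally_Lipschitz[OF deriv fixed contr] by blast
  show "isCont X s0"
  proof (rule isCont_if_connected_graph_locally_Lipschitz[where Lam = Lam, OF conn _ \<open>\<delta> > 0\<close> \<open>K \<ge> 0\<close>])
    show "isCont Lam s0" using cont by (simp add: continuous_on_eq_continuous_at)
  qed (use lipschitz fixed in blast)
qed

lemma uniform_linearization_on_cball:
  fixes g :: "'a::euclidean_space \<Rightarrow> 'b::real_normed_vector"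
  assumes deriv: "\<And>p. (g has_derivative blinfun_apply (g' p)) (at p)"
    and cont: "continuous_on UNIV g'" and "\<eta> > 0"
  obtains \<delta> where "\<delta> > 0" and "\<And>p q. p \<in> cball 0 R \<Longrightarrow> norm (q - p) < \<delta> \<Longrightarrow>
    norm (g q - g p - blinfun_apply (g' p) (q - p)) \<le> \<eta> * norm (q - p)"
proof -
  have "uniformly_continuous_on (cball 0 (R + 1)) g'"
    by (rule compact_uniformly_continuous[OF continuous_on_subset[OF cont] compact_cball]) simp
  then obtain d where "d > 0" and d: "\<And>x x'. x \<in> cball 0 (R + 1) \<Longrightarrow> x' \<in> cball 0 (R + 1) \<Longrightarrow>
      dist x' x < d \<Longrightarrow> dist (g' x') (g' x) < \<eta>"
    unfolding uniformly_continuous_on_def using \<open>\<eta> > 0\<close> by metis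
  show ?thesis
  proof
    show "min d 1 > 0" using \<open>d > 0\<close> by simp
    fix p q :: 'a assume p: "p \<in> cball 0 R" and q: "norm (q - p) < min d 1"
    have ball_sub: "ball p (min d 1) \<subseteq> cball 0 (R + 1)"
    proof
      fix x assume "x \<in> ball p (min d 1)"
      then show "x \<in> cball 0 (R + 1)"
        using p norm_triangle_sub[of x p] by (simp add: dist_norm norm_minus_commute)
    qed
    have "norm (g q - g p - blinfun_apply (g' p) (q - p)) \<le> norm (q - p) * \<eta>"
    proof (rule differentiable_bound_linearization[where S = "ball p (min d 1)" and f' = "\<lambda>x. blinfun_apply (g' x)"])
      fix t :: real assume "t \<in> {0..1}"
      then have "norm (t *\<^sub>R (q - p)) \<le> norm (q - p)" by (simp add: mult_left_le_one_le)
      then show "p + t *\<^sub>R (q - p) \<in> ball p (min d 1)" using q by (simp add: dist_norm)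
    next
      fix x assume "x \<in> ball p (min d 1)"
      then have "dist (g' x) (g' p) < \<eta>"
        using d ball_sub p \<open>d > 0\<close> by (auto simp: dist_commute)
      then show "onorm (blinfun_apply (g' x) - blinfun_apply (g' p)) \<le> \<eta>"
        by (auto simp: dist_norm norm_blinfun.rep_eq blinfun.diff_left[abs_def] fun_diff_def)
    qed (use \<open>d > 0\<close> in \<open>auto intro: has_derivative_at_withinI deriv\<close>)
    then show "norm (g q - g p - blinfun_apply (g' p) (q - p)) \<le> \<eta> * norm (q - p)"
      by (simp add: mult.commute)
  qed
qed

primrec trajectory :: "('a \<Rightarrow> 'b \<Rightarrow> 'a) \<Rightarrow> (real \<Rightarrow> 'b) \<Rightarrow> real \<Rightarrow> real \<Rightarrow> 'a \<Rightarrow> nat \<Rightarrow> 'a" where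
  "trajectory f Lam r s x 0 = x"
| "trajectory f Lam r s x (Suc k) = f (trajectory f Lam r s x k) (Lam (s + real k * r))"

lemma F_map_funpow: "(F_map f Lam r ^^ k) (s, x) = (s + real k * r, trajectory f Lam r s x k)"
  by (induction k) (simp_all add: F_map_def algebra_simps)

lemma F_map_funpow_nbhd_path_subset:
  fixes f :: "real^'l \<Rightarrow> real^'m \<Rightarrow> real^'l"
    and f' :: "(real^'l) \<times> (real^'m) \<Rightarrow> (((real^'l) \<times> (real^'m)) \<Rightarrow>\<^sub>L (real^'l))"
    and Lam :: "real \<Rightarrow> real^'m" and X :: "real \<Rightarrow> real^'l"
    and M \<epsilon> D :: real and n :: nat
  defines "E \<equiv> (M + 1) ^ n * (\<epsilon> + real n * ((M + 1) * D))"
  assumes fixed: "\<And>s. f (X s) (Lam s) = X s"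
    and norm_f': "\<And>s. norm (f' (X s, Lam s)) \<le> M" and "0 \<le> \<eta>" and "\<eta> \<le> 1"
    and remainder: "\<And>s q. norm (q - (X s, Lam s)) < \<delta> \<Longrightarrow>
      norm (f (fst q) (snd q) - X s - blinfun_apply (f' (X s, Lam s)) (q - (X s, Lam s)))
        \<le> \<eta> * norm (q - (X s, Lam s))"
    and contr: "\<And>s. onorm (Dx f' (X s) (Lam s) ^^ n) \<le> \<theta>"
    and params: "\<And>s k. k < n \<Longrightarrow> norm (Lam (s + real k * r) - Lam s) \<le> D" and "0 \<le> D"
    and drift: "\<And>s. norm (X (s + real n * r) - X s) \<le> (1 - \<theta>) * \<epsilon> / 2"
    and small: "E + D < \<delta>"
    and error: "(M + 1) ^ n * (real n * (M * D + \<eta> * (E + D))) \<le> (1 - \<theta>) * \<epsilon> / 2"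
  shows "(F_map f Lam r ^^ n) ` nbhd_path X \<epsilon> \<subseteq> nbhd_path X \<epsilon>"
proof
  fix z assume "z \<in> (F_map f Lam r ^^ n) ` nbhd_path X \<epsilon>"
  then obtain s x where z: "z = (F_map f Lam r ^^ n) (s, x)" and x: "norm (x - X s) \<le> \<epsilon>"
    unfolding nbhd_path_def by auto
  let ?xs = "trajectory f Lam r s x" and ?A = "Dx f' (X s) (Lam s)"
  have near: "norm (?xs k - X s) \<le> E" if "k \<le> n" for k
    unfolding E_def
    by (rule orbit_norm_bound[where g = "\<lambda>q. f (fst q) (snd q)" and G = "f' (X s, Lam s)"
          and xs = ?xs and ls = "\<lambda>k. Lam (s + real k * r)" and \<eta> = \<eta> and \<delta> = \<delta>])
      (use fixed norm_f' x params small that \<open>0 \<le> \<eta>\<close> \<open>\<eta> \<le> 1\<close> \<open>0 \<le> D\<close>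
        in \<open>auto simp: E_def intro: remainder\<close>)
  have "norm (?xs n - X s - (?A ^^ n) (x - X s)) \<le> (M + 1) ^ n * (real n * (M * D + \<eta> * (E + D)))"
    unfolding Dx_def
    by (rule orbit_linearization_error[where g = "\<lambda>q. f (fst q) (snd q)" and G = "f' (X s, Lam s)"
          and xs = ?xs and ls = "\<lambda>k. Lam (s + real k * r)" and \<eta> = \<eta> and \<delta> = \<delta>, simplified])
      (use fixed norm_f' params near small \<open>0 \<le> \<eta>\<close> \<open>0 \<le> D\<close> order_trans[OF norm_ge_zero near[of 0]]
        in \<open>auto intro: remainder\<close>)
  moreover have "norm ((?A ^^ n) (x - X s)) \<le> \<theta> * \<epsilon>"
  proof -
    have "norm ((?A ^^ n) (x - X s)) \<le> onorm (?A ^^ n) * norm (x - X s)"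
      by (rule onorm[OF bounded_linear_funpow[OF Dx_bounded_linear]])
    also have "\<dots> \<le> \<theta> * norm (x - X s)"
      by (rule mult_right_mono[OF contr norm_ge_zero])
    also have "\<dots> \<le> \<theta> * \<epsilon>"
      using x order_trans[OF onorm_pos_le[OF bounded_linear_funpow[OF Dx_bounded_linear]] contr]
      by (rule mult_left_mono)
    finally show ?thesis .
  qed
  ultimately have "norm (?xs n - X (s + real n * r)) \<le> \<epsilon>"
    using drift[of s] error
      norm_triangle_ineq4[of "?xs n - X s - (?A ^^ n) (x - X s) + (?A ^^ n) (x - X s)" "X (s + real n * r) - X s"]
      norm_triangle_ineq[of "?xs n - X s - (?A ^^ n) (x - X s)" "(?A ^^ n) (x - X s)"]
    by (simp add: algebra_simps)
  then show "z \<in> nbhd_path X \<epsilon>"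
    unfolding z F_map_funpow nbhd_path_def by simp
qed

lemma parameter_tolerance_exists:
  fixes M \<eta> \<epsilon> \<delta> \<theta> :: real
  assumes \<eta>: "(M + 1) ^ n * (real n * (\<eta> * (M + 1) ^ n)) < (1 - \<theta>) / 2"
    and "0 < \<epsilon>" and "(M + 1) ^ n * \<epsilon> < \<delta>"
  obtains D where "0 < D" and "(M + 1) ^ n * (\<epsilon> + real n * ((M + 1) * D)) + D < \<delta>"
    and "(M + 1) ^ n * (real n * (M * D + \<eta> * ((M + 1) ^ n * (\<epsilon> + real n * ((M + 1) * D)) + D)))
      < (1 - \<theta>) * \<epsilon> / 2"
proof -
  let ?L = "(M + 1) ^ n" and ?E = "\<lambda>D. (M + 1) ^ n * (\<epsilon> + real n * ((M + 1) * D))"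
  have "((\<lambda>D. ?L * (real n * (M * D + \<eta> * (?E D + D)))) \<longlongrightarrow>
      ?L * (real n * (M * 0 + \<eta> * (?E 0 + 0)))) (at_right 0)"
    by (intro tendsto_intros)
  moreover have "?L * (real n * (M * 0 + \<eta> * (?E 0 + 0))) < (1 - \<theta>) * \<epsilon> / 2"
    using mult_strict_right_mono[OF \<eta> \<open>0 < \<epsilon>\<close>] by (simp add: algebra_simps)
  moreover have "((\<lambda>D. ?E D + D) \<longlongrightarrow> ?E 0 + 0) (at_right 0)"
    by (intro tendsto_intros)
  moreover have "?E 0 + 0 < \<delta>" using \<open>?L * \<epsilon> < \<delta>\<close> by simp
  ultimately have "\<forall>\<^sub>F D in at_right 0. 0 < D \<and> ?E D + D < \<delta> \<and>
      ?L * (real n * (M * D + \<eta> * (?E D + D))) < (1 - \<theta>) * \<epsilon> / 2"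
    by (intro eventually_conj eventually_at_right_less order_tendstoD(2))
  then show ?thesis
    using that eventually_happens'[OF trivial_limit_at_right_real] by blast
qed

lemma eventually_F_map_funpow_nbhd_path_subset_of_linearization:
  fixes f :: "real^'l \<Rightarrow> real^'m \<Rightarrow> real^'l"
    and f' :: "(real^'l) \<times> (real^'m) \<Rightarrow> (((real^'l) \<times> (real^'m)) \<Rightarrow>\<^sub>L (real^'l))"
    and Lam :: "real \<Rightarrow> real^'m" and X :: "real \<Rightarrow> real^'l"
  assumes fixed: "\<And>s. f (X s) (Lam s) = X s" and M: "\<And>s. norm (f' (X s, Lam s)) \<le> M"
    and "0 < \<eta>" and "\<eta> \<le> 1" and \<eta>: "(M + 1) ^ n * (real n * (\<eta> * (M + 1) ^ n)) < (1 - \<theta>) / 2"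
    and "0 < \<delta>" and remainder: "\<And>s q. norm (q - (X s, Lam s)) < \<delta> \<Longrightarrow>
      norm (f (fst q) (snd q) - X s - blinfun_apply (f' (X s, Lam s)) (q - (X s, Lam s)))
        \<le> \<eta> * norm (q - (X s, Lam s))"
    and contr: "\<And>s. onorm (Dx f' (X s) (Lam s) ^^ n) \<le> \<theta>" and "\<theta> < 1"
    and uX: "uniformly_continuous_on UNIV X" and uLam: "uniformly_continuous_on UNIV Lam"
  shows "\<forall>\<^sub>F \<epsilon> in at_right 0. \<forall>\<^sub>F r in at_right 0.
    (F_map f Lam r ^^ n) ` nbhd_path X \<epsilon> \<subseteq> nbhd_path X \<epsilon>"
proof -
  have "((\<lambda>\<epsilon>. (M + 1) ^ n * \<epsilon>) \<longlongrightarrow> 0) (at_right 0)"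
    by (auto intro!: tendsto_eq_intros)
  then have "\<forall>\<^sub>F \<epsilon> in at_right 0. 0 < \<epsilon> \<and> (M + 1) ^ n * \<epsilon> < \<delta>"
    using \<open>0 < \<delta>\<close> by (intro eventually_conj eventually_at_right_less order_tendstoD(2))
  then show ?thesis
  proof (rule eventually_mono, elim conjE)
    fix \<epsilon> :: real assume "0 < \<epsilon>" and "(M + 1) ^ n * \<epsilon> < \<delta>"
    then obtain D where "0 < D" and small: "(M + 1) ^ n * (\<epsilon> + real n * ((M + 1) * D)) + D < \<delta>"
      and error: "(M + 1) ^ n * (real n * (M * D + \<eta> * ((M + 1) ^ n * (\<epsilon> + real n * ((M + 1) * D)) + D)))
        < (1 - \<theta>) * \<epsilon> / 2"
      using parameter_tolerance_exists[OF \<eta>] by blast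
    have "(1 - \<theta>) * \<epsilon> / 2 > 0" using \<open>\<theta> < 1\<close> \<open>0 < \<epsilon>\<close> by simp
    with \<open>0 < D\<close> have "\<forall>\<^sub>F r in at_right 0.
        (\<forall>s. \<forall>k\<le>n. dist (Lam (s + real k * r)) (Lam s) < D) \<and>
        (\<forall>s. \<forall>k\<le>n. dist (X (s + real k * r)) (X s) < (1 - \<theta>) * \<epsilon> / 2)"
      by (intro eventually_conj uniformly_continuous_on_UNIV_eventually_shifts_close uX uLam)
    then show "\<forall>\<^sub>F r in at_right 0. (F_map f Lam r ^^ n) ` nbhd_path X \<epsilon> \<subseteq> nbhd_path X \<epsilon>"
    proof (rule eventually_mono)
      fix r assume close: "(\<forall>s. \<forall>k\<le>n. dist (Lam (s + real k * r)) (Lam s) < D) \<and>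
        (\<forall>s. \<forall>k\<le>n. dist (X (s + real k * r)) (X s) < (1 - \<theta>) * \<epsilon> / 2)"
      show "(F_map f Lam r ^^ n) ` nbhd_path X \<epsilon> \<subseteq> nbhd_path X \<epsilon>"
      proof (rule F_map_funpow_nbhd_path_subset[where M = M and \<eta> = \<eta> and \<delta> = \<delta> and D = D and \<theta> = \<theta>])
        show "norm (Lam (s + real k * r) - Lam s) \<le> D" if "k < n" for s k
          using close that by (auto simp: dist_norm less_imp_le)
        show "norm (X (s + real n * r) - X s) \<le> (1 - \<theta>) * \<epsilon> / 2" for s
          using close by (auto simp: dist_norm less_imp_le)
      qed (use fixed M remainder contr \<open>0 < \<eta>\<close> \<open>\<eta> \<le> 1\<close> \<open>0 < D\<close> small error in auto)
    qed
  qed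
qed

lemma eventually_F_map_funpow_nbhd_path_subset:
  fixes f :: "real^'l \<Rightarrow> real^'m \<Rightarrow> real^'l"
    and f' :: "(real^'l) \<times> (real^'m) \<Rightarrow> (((real^'l) \<times> (real^'m)) \<Rightarrow>\<^sub>L (real^'l))"
    and Lam :: "real \<Rightarrow> real^'m" and X :: "real \<Rightarrow> real^'l"
  assumes C1: "C1_field f f'" and fixed: "\<And>s. f (X s) (Lam s) = X s"
    and path_bounded: "\<And>s. (X s, Lam s) \<in> cball 0 R"
    and uX: "uniformly_continuous_on UNIV X" and uLam: "uniformly_continuous_on UNIV Lam"
    and contr: "\<And>s. onorm (Dx f' (X s) (Lam s) ^^ n) \<le> \<theta>" and "\<theta> < 1"
  shows "\<forall>\<^sub>F \<epsilon> in at_right 0. \<forall>\<^sub>F r in at_right 0.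
    (F_map f Lam r ^^ n) ` nbhd_path X \<epsilon> \<subseteq> nbhd_path X \<epsilon>"
proof -
  have deriv: "\<And>p. ((\<lambda>q. f (fst q) (snd q)) has_derivative blinfun_apply (f' p)) (at p)"
    and "continuous_on UNIV f'"
    using C1 unfolding C1_field_def by auto
  then have "bounded (f' ` cball 0 R)"
    by (intro compact_imp_bounded compact_continuous_image) (auto intro: continuous_on_subset)
  then obtain M where M: "\<And>s. norm (f' (X s, Lam s)) \<le> M"
    using path_bounded unfolding bounded_iff by blast
  let ?L = "(M + 1) ^ n"
  have "((\<lambda>\<eta>. ?L * (real n * (\<eta> * ?L))) \<longlongrightarrow> 0) (at_right 0)"
    by (auto intro!: tendsto_eq_intros)
  then have "\<forall>\<^sub>F \<eta> in at_right 0. ?L * (real n * (\<eta> * ?L)) < (1 - \<theta>) / 2"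
    using \<open>\<theta> < 1\<close> by (intro order_tendstoD(2)) auto
  moreover have "\<forall>\<^sub>F \<eta> in at_right 0. \<eta> < (1::real)"
    by (intro order_tendstoD(2)[OF tendsto_ident_at]) simp
  ultimately have "\<forall>\<^sub>F \<eta> in at_right 0. 0 < \<eta> \<and> \<eta> < 1 \<and> ?L * (real n * (\<eta> * ?L)) < (1 - \<theta>) / 2"
    by (intro eventually_conj eventually_at_right_less)
  then obtain \<eta> where "0 < \<eta>" "\<eta> < 1" and \<eta>: "?L * (real n * (\<eta> * ?L)) < (1 - \<theta>) / 2"
    using eventually_happens'[OF trivial_limit_at_right_real] by blast
  obtain \<delta> where "\<delta> > 0" and linearization: "\<And>p q. p \<in> cball 0 R \<Longrightarrow> norm (q - p) < \<delta> \<Longrightarrow>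
      norm (f (fst q) (snd q) - f (fst p) (snd p) - blinfun_apply (f' p) (q - p)) \<le> \<eta> * norm (q - p)"
    using uniform_linearization_on_cball[OF deriv \<open>continuous_on UNIV f'\<close> \<open>0 < \<eta>\<close>] by blast
  show ?thesis
  proof (rule eventually_F_map_funpow_nbhd_path_subset_of_linearization[OF fixed M \<open>0 < \<eta>\<close> _ \<eta> \<open>\<delta> > 0\<close> _ contr \<open>\<theta> < 1\<close> uX uLam])
    show "norm (f (fst q) (snd q) - X s - blinfun_apply (f' (X s, Lam s)) (q - (X s, Lam s)))
        \<le> \<eta> * norm (q - (X s, Lam s))" if "norm (q - (X s, Lam s)) < \<delta>" for s q
      using linearization[OF path_bounded that] fixed by simp
  qed (use \<open>\<eta> < 1\<close> in simp)
qed

lemma stable_path_uniformly_continuous_bounded: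
  fixes f :: "real^'l \<Rightarrow> real^'m \<Rightarrow> real^'l"
    and f' :: "(real^'l) \<times> (real^'m) \<Rightarrow> (((real^'l) \<times> (real^'m)) \<Rightarrow>\<^sub>L (real^'l))"
    and Lam :: "real \<Rightarrow> real^'m" and X :: "real \<Rightarrow> real^'l"
  assumes "C1_field f f'" and "parameter_shift Lam Lam' lm lp" and "stable_path f f' Lam lm lp X"
    and contr: "\<And>s. onorm (Dx f' (X s) (Lam s) ^^ N) < 1"
  shows "uniformly_continuous_on UNIV X" and "uniformly_continuous_on UNIV Lam"
    and "bounded (range (\<lambda>s. (X s, Lam s)))"
proof -
  obtain Xm Xp where fixed: "\<And>s. f (X s) (Lam s) = X s" and conn: "connected {(s, X s) | s. True}"
    and X_bot: "(X \<longlongrightarrow> Xm) at_bot" and X_top: "(X \<longlongrightarrow> Xp) at_top"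
    using assms(3) unfolding stable_path_def by blast
  have Lam_deriv: "\<And>s. (Lam has_vector_derivative Lam' s) (at s)"
    and Lam_bot: "(Lam \<longlongrightarrow> lm) at_bot" and Lam_top: "(Lam \<longlongrightarrow> lp) at_top"
    using assms(2) unfolding parameter_shift_def by auto
  have cont_Lam: "continuous_on UNIV Lam"
    by (rule continuous_at_imp_continuous_on) (use has_vector_derivative_continuous[OF Lam_deriv] in blast)
  have deriv: "\<And>p. ((\<lambda>q. f (fst q) (snd q)) has_derivative blinfun_apply (f' p)) (at p)"
    using assms(1) unfolding C1_field_def by blast
  have cont_X: "continuous_on UNIV X"
    by (rule continuous_on_path_of_fixed_points[OF deriv fixed conn cont_Lam contr])
  show "uniformly_continuous_on UNIV X" "uniformly_continuous_on UNIV Lam"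
    by (rule uniformly_continuous_on_UNIV_if_tendsto_at_top_at_bot; fact)+
  have "bounded (range X \<times> range Lam)"
    by (intro bounded_Times bounded_range_if_tendsto_at_top_at_bot[OF cont_X X_top X_bot]
        bounded_range_if_tendsto_at_top_at_bot[OF cont_Lam Lam_top Lam_bot])
  then show "bounded (range (\<lambda>s. (X s, Lam s)))"
    by (rule bounded_subset) auto
qed

theorem mainTheorem13:
  fixes f :: "real^'l \<Rightarrow> real^'m \<Rightarrow> real^'l"
    and f' :: "(real^'l) \<times> (real^'m) \<Rightarrow> (((real^'l) \<times> (real^'m)) \<Rightarrow>\<^sub>L (real^'l))"
    and Lam Lam' :: "real \<Rightarrow> real^'m"
    and lm lp :: "real^'m"
    and X :: "real \<Rightarrow> real^'l"
    and N :: nat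
  assumes "C1_field f f'"
    and "parameter_shift Lam Lam' lm lp"
    and "stable_path f f' Lam lm lp X"
    and "\<forall>s. \<forall>n\<ge>N. onorm ((Dx f' (X s) (Lam s)) ^^ n) < 1/4"
  shows "\<forall>\<^sub>F \<epsilon> in at_right 0. \<forall>\<^sub>F r in at_right 0.
           \<forall>n\<in>{N..N*(N+1)}. (F_map f Lam r ^^ n) ` nbhd_path X \<epsilon> \<subseteq> nbhd_path X \<epsilon>"
proof -
  have fixed: "\<And>s. f (X s) (Lam s) = X s"
    using assms(3) unfolding stable_path_def by blast
  have contr: "onorm (Dx f' (X s) (Lam s) ^^ n) < 1/4" if "N \<le> n" for s n
    using assms(4) that by blast
  have "onorm (Dx f' (X s) (Lam s) ^^ N) < 1" for s
    using contr[OF order_refl, of s] by linarith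
  note regularity = stable_path_uniformly_continuous_bounded[OF assms(1-3) this]
  obtain R where path_bounded: "\<And>s. (X s, Lam s) \<in> cball 0 R"
    using regularity(3) unfolding bounded_iff by auto
  have "\<forall>\<^sub>F \<epsilon> in at_right 0. \<forall>\<^sub>F r in at_right 0.
      (F_map f Lam r ^^ n) ` nbhd_path X \<epsilon> \<subseteq> nbhd_path X \<epsilon>" if "N \<le> n" for n
    by (rule eventually_F_map_funpow_nbhd_path_subset[where \<theta> = "1/4",
          OF assms(1) fixed path_bounded regularity(1,2)])
      (use contr[OF that] in \<open>auto intro: less_imp_le\<close>)
  then have "\<forall>\<^sub>F \<epsilon> in at_right 0. \<forall>n\<in>{N..N*(N+1)}. \<forall>\<^sub>F r in at_right 0.
      (F_map f Lam r ^^ n) ` nbhd_path X \<epsilon> \<subseteq> nbhd_path X \<epsilon>"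
    by (intro eventually_ball_finite) auto
  then show ?thesis
    by (rule eventually_mono) (rule eventually_ball_finite, auto)
qed

end
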